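(* Assume that $d_k < \sqrt2\,(p_k)^{1/2}$ for every integer $k\geq1$ with $k\neq 4$. Let $f(n) := n(n+1)/2$. Then for every integer $n\geq 1$, $$\pi(n^3) < \pi(n^3 + f(n)) < \pi(n^3 + 2f(n)) < \pi(n^3 + 4f(n)) < \pi(n^3 + 6f(n)).$$ In particular there are at least four primes between $n^3$ and $(n+1)^3$.
   Context: $p_k$ denotes the $k$th prime ($p_1=2$), $d_k := p_{k+1}-p_k$, and $\pi(x)$ is the number of primes $p\le x$. *)

theory Defs
  imports Complex_Main "HOL-Computational_Algebra.Primes" "HOL-Library.Infinite_Set"
begin

(* p_k: the k-th prime, 1-indexed (p_1 = 2). enumerate is 0-indexed. *)
definition nth_prime :: "nat \<Rightarrow> nat" where
  "nth_prime k = enumerate {q. prime q} (k - 1)"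

definition prime_gap :: "nat \<Rightarrow> nat" where
  "prime_gap k = nth_prime (k + 1) - nth_prime k"

definition prime_pi :: "nat \<Rightarrow> nat" where
  "prime_pi x = card {q. prime q \<and> q \<le> x}"

end

theory Submission
  imports Defs
begin

(* Let p be the largest prime not exceeding x >= 11. Its index is not 4 (p_4 = 7), so the
   hypothesis puts the next prime, which exceeds x, within sqrt (2 p) <= sqrt (2 x) of p: the
   interval (x, x + L] contains a prime whenever 2 x <= L^2. With F = n (n + 1) / 2 the windows
   (n^3, n^3 + F], (n^3 + F, n^3 + 2 F], (n^3 + 2 F, n^3 + 4 F], (n^3 + 4 F, n^3 + 6 F] meet this
   condition for n >= 7, because 8 n^3 + 4 n (n + 1) <= n^2 (n + 1)^2; the cases n <= 6 are
   checked by evaluation. Since n^3 + 6 F = n^3 + 3 n^2 + 3 n < (n + 1)^3, the four primes lie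
   below the next cube. *)

lemma enumerate_card_less:
  fixes S :: "nat set"
  assumes "infinite S" and "s \<in> S"
  shows "enumerate S (card {x\<in>S. x < s}) = s"
proof -
  obtain n where n: "enumerate S n = s"
    using enumerate_Ex[OF assms] by blast
  have "{x\<in>S. x < s} = enumerate S ` {..<n}"
  proof
    show "{x\<in>S. x < s} \<subseteq> enumerate S ` {..<n}"
    proof
      fix x assume x: "x \<in> {x\<in>S. x < s}"
      then obtain i where "enumerate S i = x"
        using enumerate_Ex[OF assms(1)] by blast
      with x n assms(1) show "x \<in> enumerate S ` {..<n}" by auto
    qed
    show "enumerate S ` {..<n} \<subseteq> {x\<in>S. x < s}"
      using n assms(1) enumerate_in_set by auto
  qed
  moreover have "inj_on (enumerate S) {..<n}"
    using inj_enumerate[OF assms(1)] by (rule inj_on_subset) simp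
  ultimately show ?thesis
    using n by (simp add: card_image)
qed

lemma infinite_primes_nat: "infinite {q::nat. prime q}"
  using primes_infinite by simp

lemma prime_nth_prime: "prime (nth_prime k)"
  using enumerate_in_set[OF infinite_primes_nat] by (simp add: nth_prime_def)

(* k = 0 is excluded: the index shift k - 1 makes nth_prime 0 = nth_prime 1. *)
lemma nth_prime_less_Suc: "1 \<le> k \<Longrightarrow> nth_prime k < nth_prime (Suc k)"
  using enumerate_step[OF infinite_primes_nat, of "k - 1"] by (simp add: nth_prime_def)

lemma nth_prime_Suc_card_less:
  "prime p \<Longrightarrow> nth_prime (Suc (card {q. prime q \<and> q < p})) = p"
  using enumerate_card_less[OF infinite_primes_nat, of p] by (simp add: nth_prime_def)

lemma nth_prime_4: "nth_prime 4 = 7"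
proof -
  have below_7: "q < 7 \<Longrightarrow> q \<in> {0, 1, 2, 3, 4, 5, 6}" for q :: nat
    by auto
  have "prime (2::nat)" "prime (3::nat)" "\<not> prime (4::nat)" "prime (5::nat)"
    and "\<not> prime (6::nat)"
    by code_simp+
  then have "{q::nat. prime q \<and> q < 7} = {2, 3, 5}"
    by (auto dest: below_7)
  moreover have "prime (7::nat)"
    by code_simp
  ultimately show ?thesis
    using nth_prime_Suc_card_less[of 7] by (simp add: eval_nat_numeral)
qed

lemma nth_prime_bracket:
  assumes "prime p" and "p \<le> x"
  obtains k where "1 \<le> k" "p \<le> nth_prime k" "nth_prime k \<le> x" "x < nth_prime (Suc k)"
proof -
  define P where "P = Max {q. prime q \<and> q \<le> x}"
  have fin: "finite {q. prime q \<and> q \<le> x}" by simp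
  have "P \<in> {q. prime q \<and> q \<le> x}"
    unfolding P_def using fin assms by (intro Max_in) auto
  moreover have "p \<le> P"
    unfolding P_def using fin assms by (intro Max_ge) auto
  ultimately have P: "prime P" "P \<le> x" "p \<le> P" by auto
  define k where "k = Suc (card {q. prime q \<and> q < P})"
  have kP: "nth_prime k = P"
    unfolding k_def by (rule nth_prime_Suc_card_less[OF \<open>prime P\<close>])
  have "x < nth_prime (Suc k)"
  proof (rule ccontr)
    assume "\<not> x < nth_prime (Suc k)"
    then have "nth_prime (Suc k) \<le> P"
      using fin prime_nth_prime unfolding P_def by (auto intro: Max_ge)
    with nth_prime_less_Suc[of k] kP show False by (simp add: k_def)
  qed
  with P kP show thesis
    by (intro that[of k]) (simp_all add: k_def)
qed

definition prime_between :: "nat \<Rightarrow> nat \<Rightarrow> bool" where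
  "prime_between a b \<longleftrightarrow> (\<exists>q\<in>{a<..b}. prime q)"

lemma prime_between_of_gap_bound:
  assumes gap: "\<And>k. k \<ge> 1 \<Longrightarrow> k \<noteq> 4 \<Longrightarrow>
      real (prime_gap k) < sqrt 2 * sqrt (real (nth_prime k))"
    and "11 \<le> x" and "2 * x \<le> L^2"
  shows "prime_between x (x + L)"
proof -
  have "prime (11::nat)" by code_simp
  then obtain k
    where k: "1 \<le> k" "11 \<le> nth_prime k" "nth_prime k \<le> x" "x < nth_prime (Suc k)"
    using \<open>11 \<le> x\<close> by (rule nth_prime_bracket)
  have "k \<noteq> 4"
    using k(2) nth_prime_4 by auto
  then have "real (prime_gap k) < sqrt (2 * real (nth_prime k))"
    using gap k(1) by (simp add: real_sqrt_mult)
  also have "\<dots> \<le> sqrt (real (L^2))"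
    using k(3) \<open>2 * x \<le> L^2\<close> by (intro real_sqrt_le_mono) linarith
  also have "\<dots> = real L"
    by simp
  finally have "nth_prime (Suc k) \<le> x + L"
    using k(3) unfolding prime_gap_def by simp
  with k(4) show ?thesis
    unfolding prime_between_def
    by (intro bexI[of _ "nth_prime (Suc k)"] prime_nth_prime) auto
qed

lemma prime_between_imp_prime_pi_less:
  assumes "prime_between a b"
  shows "prime_pi a < prime_pi b"
proof -
  obtain q where q: "prime q" "a < q" "q \<le> b"
    using assms unfolding prime_between_def by auto
  then have "q \<in> {p. prime p \<and> p \<le> b} - {p. prime p \<and> p \<le> a}"
    by simp
  moreover have "{p. prime p \<and> p \<le> a} \<subseteq> {p. prime p \<and> p \<le> b}"
    using q by auto
  ultimately have "{p. prime p \<and> p \<le> a} \<subset> {p. prime p \<and> p \<le> b}"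
    by blast
  then show ?thesis
    unfolding prime_pi_def by (rule psubset_card_mono[rotated]) simp
qed

lemma card_primes_interval:
  assumes "a \<le> b"
  shows "card {q. prime q \<and> a < q \<and> q \<le> b} = prime_pi b - prime_pi a"
proof -
  have "{q. prime q \<and> q \<le> b}
      = {q. prime q \<and> q \<le> a} \<union> {q. prime q \<and> a < q \<and> q \<le> b}"
    using assms by auto
  then have "prime_pi b = prime_pi a + card {q. prime q \<and> a < q \<and> q \<le> b}"
    unfolding prime_pi_def by (simp add: card_Un_disjoint disjoint_iff)
  then show ?thesis by simp
qed

definition primes_in_cube_windows :: "nat \<Rightarrow> bool" where
  "primes_in_cube_windows n \<longleftrightarrow> (let F = n * (n + 1) div 2 in
     prime_between (n^3) (n^3 + F) \<and> prime_between (n^3 + F) (n^3 + 2 * F) \<and>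
     prime_between (n^3 + 2 * F) (n^3 + 4 * F) \<and> prime_between (n^3 + 4 * F) (n^3 + 6 * F))"

lemma primes_in_cube_windows_small:
  assumes "1 \<le> n" and "n \<le> 6"
  shows "primes_in_cube_windows n"
proof -
  from assms consider "n = 1" | "n = 2" | "n = 3" | "n = 4" | "n = 5" | "n = 6"
    by linarith
  then show ?thesis
    by (cases; simp add: primes_in_cube_windows_def; intro conjI; code_simp)
qed

lemma cube_window_inequality:
  fixes n :: nat
  assumes "7 \<le> n"
  shows "8 * n^3 + 4 * (n * (n + 1)) \<le> (n * (n + 1))^2"
proof -
  obtain m where "n = m + 7"
    using assms by (metis add.commute le_Suc_ex)
  then show ?thesis
    by (simp add: algebra_simps power2_eq_square power3_eq_cube)
qed

lemma primes_in_cube_windows_large: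
  assumes "7 \<le> n"
    and gap: "\<And>k. k \<ge> 1 \<Longrightarrow> k \<noteq> 4 \<Longrightarrow>
      real (prime_gap k) < sqrt 2 * sqrt (real (nth_prime k))"
  shows "primes_in_cube_windows n"
proof -
  define F where "F = n * (n + 1) div 2"
  have F2: "2 * F = n * (n + 1)"
    unfolding F_def by simp
  have "8 * n^3 + 4 * (2 * F) \<le> (2 * F)^2"
    using cube_window_inequality[OF \<open>7 \<le> n\<close>] unfolding F2 .
  then have window_bound: "2 * (n^3 + F) \<le> F^2"
    by (simp add: power_mult_distrib)
  have "7^3 \<le> n^3"
    using \<open>7 \<le> n\<close> by (rule power_mono) simp
  then have cube_ge_11: "11 \<le> n^3" by simp
  have "prime_between (n^3) (n^3 + F)"
    using prime_between_of_gap_bound[OF gap, of "n^3" F]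
      cube_ge_11 window_bound by simp
  moreover have "prime_between (n^3 + F) (n^3 + 2 * F)"
    using prime_between_of_gap_bound[OF gap, of "n^3 + F" F]
      cube_ge_11 window_bound by (simp add: mult_2 add.assoc)
  moreover have "prime_between (n^3 + 2 * F) (n^3 + 4 * F)"
    using prime_between_of_gap_bound[OF gap, of "n^3 + 2 * F" "2 * F"]
      cube_ge_11 window_bound
    by (simp add: power_mult_distrib add.assoc)
  moreover have "prime_between (n^3 + 4 * F) (n^3 + 6 * F)"
    using prime_between_of_gap_bound[OF gap, of "n^3 + 4 * F" "2 * F"]
      cube_ge_11 window_bound
    by (simp add: power_mult_distrib add.assoc)
  ultimately show ?thesis
    unfolding primes_in_cube_windows_def F_def Let_def by blast
qed

lemma primes_below_next_cube:
  assumes "primes_in_cube_windows n" and F: "F = n * (n + 1) div 2"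
  shows "prime_pi (n^3) < prime_pi (n^3 + F) \<and>
      prime_pi (n^3 + F) < prime_pi (n^3 + 2 * F) \<and>
      prime_pi (n^3 + 2 * F) < prime_pi (n^3 + 4 * F) \<and>
      prime_pi (n^3 + 4 * F) < prime_pi (n^3 + 6 * F) \<and>
      card {q. prime q \<and> n^3 < q \<and> q < (n + 1)^3} \<ge> 4"
proof -
  have chain: "prime_pi (n^3) < prime_pi (n^3 + F) \<and>
      prime_pi (n^3 + F) < prime_pi (n^3 + 2 * F) \<and>
      prime_pi (n^3 + 2 * F) < prime_pi (n^3 + 4 * F) \<and>
      prime_pi (n^3 + 4 * F) < prime_pi (n^3 + 6 * F)"
    using assms unfolding primes_in_cube_windows_def Let_def
    by (blast intro: prime_between_imp_prime_pi_less)
  have "2 * F = n * (n + 1)"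
    using F by simp
  then have "n^3 + 6 * F < (n + 1)^3"
    by (simp add: power3_eq_cube algebra_simps)
  then have "{q. prime q \<and> n^3 < q \<and> q \<le> n^3 + 6 * F}
      \<subseteq> {q. prime q \<and> n^3 < q \<and> q < (n + 1)^3}"
    by auto
  then have "card {q. prime q \<and> n^3 < q \<and> q \<le> n^3 + 6 * F}
      \<le> card {q. prime q \<and> n^3 < q \<and> q < (n + 1)^3}"
    by (intro card_mono) simp_all
  then have "prime_pi (n^3 + 6 * F) - prime_pi (n^3)
      \<le> card {q. prime q \<and> n^3 < q \<and> q < (n + 1)^3}"
    by (simp add: card_primes_interval)
  with chain show ?thesis
    by linarith
qed

theorem theorem8p1:
  fixes f :: "nat \<Rightarrow> nat"
  assumes gap: "\<And>k. k \<ge> 1 \<Longrightarrow> k \<noteq> 4 \<Longrightarrow>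
      real (prime_gap k) < sqrt 2 * sqrt (real (nth_prime k))"
    and f_def: "\<And>n. f n = n * (n + 1) div 2"
  shows "\<forall>n\<ge>1.
      prime_pi (n^3) < prime_pi (n^3 + f n) \<and>
      prime_pi (n^3 + f n) < prime_pi (n^3 + 2 * f n) \<and>
      prime_pi (n^3 + 2 * f n) < prime_pi (n^3 + 4 * f n) \<and>
      prime_pi (n^3 + 4 * f n) < prime_pi (n^3 + 6 * f n) \<and>
      card {q. prime q \<and> n^3 < q \<and> q < (n + 1)^3} \<ge> 4"
proof -
  have windows: "primes_in_cube_windows n" if "1 \<le> n" for n
  proof (cases "n \<le> 6")
    case True
    with that show ?thesis by (rule primes_in_cube_windows_small)
  next
    case False
    then have "7 \<le> n" by simp
    then show ?thesis using gap by (rule primes_in_cube_windows_large)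
  qed
  show ?thesis
    using primes_below_next_cube[OF windows f_def] by blast
qed

end
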